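(* Let $A$ be an irreducible $\{0,1\}$-matrix which is not a permutation matrix, and let $\mathcal{C}$ be a right Markov code for $(X_A,\sigma_A)$. Then the matrix $A(\mathcal{C})$ is irreducible and is not a permutation matrix.
   Context: For an $N\times N$ matrix $A$ with entries in $\{0,1\}$, $\Sigma_A=\{1,\dots,N\}$, $X_A$ is the set of sequences $(x_n)_{n\in\mathbb{N}}$ in $\Sigma_A$ with $A(x_n,x_{n+1})=1$ for all $n$, with shift $\sigma_A$. $B_k(X_A)$ is the set of admissible words of length $k$, $B_*(X_A)$ the union over $k\ge0$ (including the empty word). For a word $w=w_1\cdots w_\ell$, $\sigma_A(w)=w_2\cdots w_\ell$. A code is a nonempty $\mathcal{C}\subset B_*(X_A)$ such that any equality of concatenations $\omega(i_1)\cdots\omega(i_k)=\omega(j_1)\cdots\omega(j_n)$ of words of $\mathcal{C}$ forces $n=k$ and $\omega(i_m)=\omega(j_m)$ for all $m$; a prefix code is a code in which no word is a prefix of another. A finite prefix code $\mathcal{C}=\{\omega(1),\dots,\omega(M)\}\subset B_*(X_A)$, $\Sigma_{A(\mathcal{C})}=\{1,\dots,M\}$, is a right Markov code for $(X_A,\sigma_A)$ if: (i) for every $\gamma\in B_*(X_A)$ there is $\eta\in B_*(X_A)$ with $\gamma\eta\in B_*(X_A)$ and a unique finite sequence $(i_1,\dots,i_k)$ in $\Sigma_{A(\mathcal{C})}$ with $\gamma\eta=\omega(i_1)\cdots\omega(i_k)$; (ii) there is $L\in\mathbb{N}$ such that for all $i_1,\dots,i_L$ with $\omega(i_1)\cdots\omega(i_L)\in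 B_*(X_A)$ there exist $j_1,\dots,j_k\in\Sigma_{A(\mathcal{C})}$ with $\sigma_A(\omega(i_1))\omega(i_2)\cdots\omega(i_L)=\omega(j_1)\cdots\omega(j_k)$; (iii) for every $i,j$ there are $n_1,\dots,n_l$ with $\omega(i)\omega(n_1)\cdots\omega(n_l)\omega(j)\in B_*(X_A)$. $A(\mathcal{C})$ is the $M\times M$ $\{0,1\}$-matrix with $A(\mathcal{C})(i,j)=A(r(\omega(i)),s(\omega(j)))$, where $s(\omega(i))$, $r(\omega(i))$ are the first and last symbols of $\omega(i)$; equivalently $A(\mathcal{C})(i,j)=1$ iff $\omega(i)\omega(j)\in B_*(X_A)$. *)

theory Defs
  imports Main "HOL-Library.Sublist"
begin

text \<open>Matrices are indexed by symbols 1..N, represented as functions nat => nat => nat.\<close>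

definition zero_one_matrix :: "nat \<Rightarrow> (nat \<Rightarrow> nat \<Rightarrow> nat) \<Rightarrow> bool" where
  "zero_one_matrix N A \<longleftrightarrow> (\<forall>i\<in>{1..N}. \<forall>j\<in>{1..N}. A i j \<in> {0,1})"

fun mat_pow :: "nat \<Rightarrow> (nat \<Rightarrow> nat \<Rightarrow> nat) \<Rightarrow> nat \<Rightarrow> nat \<Rightarrow> nat \<Rightarrow> nat" where
  "mat_pow N A 0 i j = (if i = j then 1 else 0)"
| "mat_pow N A (Suc n) i j = (\<Sum>k\<in>{1..N}. mat_pow N A n i k * A k j)"

definition irreducible_mat :: "nat \<Rightarrow> (nat \<Rightarrow> nat \<Rightarrow> nat) \<Rightarrow> bool" where
  "irreducible_mat N A \<longleftrightarrow>
     (\<forall>i\<in>{1..N}. \<forall>j\<in>{1..N}. \<exists>n\<ge>1. mat_pow N A n i j > 0)"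

definition permutation_mat :: "nat \<Rightarrow> (nat \<Rightarrow> nat \<Rightarrow> nat) \<Rightarrow> bool" where
  "permutation_mat N A \<longleftrightarrow> zero_one_matrix N A \<and>
     (\<forall>i\<in>{1..N}. card {j\<in>{1..N}. A i j = 1} = 1) \<and>
     (\<forall>j\<in>{1..N}. card {i\<in>{1..N}. A i j = 1} = 1)"

definition X_A :: "nat \<Rightarrow> (nat \<Rightarrow> nat \<Rightarrow> nat) \<Rightarrow> (nat \<Rightarrow> nat) set" where
  "X_A N A = {x. (\<forall>n. x n \<in> {1..N}) \<and> (\<forall>n. A (x n) (x (Suc n)) = 1)}"

definition B_star :: "nat \<Rightarrow> (nat \<Rightarrow> nat \<Rightarrow> nat) \<Rightarrow> nat list set" where
  "B_star N A = {w. \<exists>x\<in>X_A N A. \<exists>m. w = map x [m..<m + length w]}"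

definition is_code :: "nat list set \<Rightarrow> bool" where
  "is_code C \<longleftrightarrow> C \<noteq> {} \<and>
     (\<forall>us vs. set us \<subseteq> C \<longrightarrow> set vs \<subseteq> C \<longrightarrow> concat us = concat vs \<longrightarrow> us = vs)"

definition is_prefix_code :: "nat list set \<Rightarrow> bool" where
  "is_prefix_code C \<longleftrightarrow> is_code C \<and> (\<forall>u\<in>C. \<forall>v\<in>C. u \<noteq> v \<longrightarrow> \<not> prefix u v)"

text \<open>A right Markov code given as an enumeration omega(1),...,omega(M) of a finite prefix code.\<close>
definition right_markov_code ::
  "nat \<Rightarrow> (nat \<Rightarrow> nat \<Rightarrow> nat) \<Rightarrow> nat \<Rightarrow> (nat \<Rightarrow> nat list) \<Rightarrow> bool" where
  "right_markov_code N A M \<omega> \<longleftrightarrow>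
     M \<ge> 1 \<and> inj_on \<omega> {1..M} \<and> \<omega> ` {1..M} \<subseteq> B_star N A \<and>
     is_prefix_code (\<omega> ` {1..M}) \<and>
     (\<forall>\<gamma>\<in>B_star N A. \<exists>\<eta>\<in>B_star N A. \<gamma> @ \<eta> \<in> B_star N A \<and>
        (\<exists>!is. set is \<subseteq> {1..M} \<and> \<gamma> @ \<eta> = concat (map \<omega> is))) \<and>
     (\<exists>L::nat. L \<ge> 1 \<and> (\<forall>is. length is = L \<longrightarrow> set is \<subseteq> {1..M} \<longrightarrow>
        concat (map \<omega> is) \<in> B_star N A \<longrightarrow>
        (\<exists>js. set js \<subseteq> {1..M} \<and>
           tl (\<omega> (hd is)) @ concat (map \<omega> (tl is)) = concat (map \<omega> js)))) \<and>
     (\<forall>i\<in>{1..M}. \<forall>j\<in>{1..M}. \<exists>ns. set ns \<subseteq> {1..M} \<and>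
        \<omega> i @ concat (map \<omega> ns) @ \<omega> j \<in> B_star N A)"

text \<open>The matrix A(C): A(C)(i,j) = A(r(omega i), s(omega j)).\<close>
definition code_matrix :: "(nat \<Rightarrow> nat \<Rightarrow> nat) \<Rightarrow> (nat \<Rightarrow> nat list) \<Rightarrow> nat \<Rightarrow> nat \<Rightarrow> nat" where
  "code_matrix A \<omega> i j = A (last (\<omega> i)) (hd (\<omega> j))"

end

theory Submission
  imports Defs
begin

text \<open>
  Irreducibility of \<open>A(C)\<close> is read off condition (iii): the word
  \<open>\<omega>(i) \<omega>(n\<^sub>1) \<dots> \<omega>(n\<^sub>l) \<omega>(j)\<close> is admissible, so \<open>i n\<^sub>1 \<dots> n\<^sub>l j\<close> is a walk of \<open>A(C)\<close>.

  Suppose \<open>A(C)\<close> were a permutation matrix, so that every code word has exactly one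
  successor. Since \<open>A\<close> is irreducible but not a permutation matrix, some symbol \<open>a\<close> has two
  successors and lies on a cycle \<open>a w\<close>; running around the cycle \<open>k\<close> times and then leaving
  it through a successor \<open>y\<close> of \<open>a\<close> other than the first letter of \<open>w\<close> gives admissible words
  \<open>a w\<^sup>k y\<close>, none of which is a prefix of another. By condition (i) each of them is a prefix
  of an admissible concatenation of code words, which is a walk of \<open>A(C)\<close> and hence determined
  by its first code word. So the words of a prefix antichain start with pairwise distinct code
  words, and there are at most \<open>M\<close> of them, contradicting the \<open>M + 1\<close> words \<open>a w\<^sup>k y\<close>.
\<close>

definition admissible :: "nat \<Rightarrow> (nat \<Rightarrow> nat \<Rightarrow> nat) \<Rightarrow> nat list \<Rightarrow> bool" where
  "admissible N A w \<longleftrightarrow> set w \<subseteq> {1..N} \<and> successively (\<lambda>a b. A a b = 1) w"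

lemma admissible_if_in_B_star:
  assumes "w \<in> B_star N A"
  shows "admissible N A w"
proof -
  obtain x m where x: "x \<in> X_A N A" and w: "w = map x [m..<m + length w]"
    using assms unfolding B_star_def by blast
  have "x n \<in> {1..N}" "A (x n) (x (Suc n)) = 1" for n
    using x unfolding X_A_def by auto
  then have "admissible N A (map x [m..<m + length w])"
    by (auto simp: admissible_def successively_conv_nth)
  then show ?thesis
    unfolding w[symmetric] .
qed

lemma in_B_star_if_admissible:
  assumes successor: "\<forall>i\<in>{1..N}. \<exists>j\<in>{1..N}. A i j = 1"
    and "w \<noteq> []" and "admissible N A w"
  shows "w \<in> B_star N A"
proof -
  obtain s where s: "\<forall>i\<in>{1..N}. s i \<in> {1..N} \<and> A i (s i) = 1"
    using successor by metis
  have w: "set w \<subseteq> {1..N}" "successively (\<lambda>a b. A a b = 1) w"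
    using assms(3) unfolding admissible_def by auto
  define x where "x n = (if n < length w then w ! n else (s ^^ (Suc n - length w)) (last w))" for n
  have last_w: "last w \<in> {1..N}"
    using w(1) \<open>w \<noteq> []\<close> last_in_set by blast
  have iter: "(s ^^ k) (last w) \<in> {1..N}" for k
    by (induction k) (use s last_w in auto)
  have "x n \<in> {1..N}" for n
    using subsetD[OF w(1) nth_mem] iter by (simp add: x_def)
  moreover have "A (x n) (x (Suc n)) = 1" for n
  proof -
    consider "Suc n < length w" | "Suc n = length w" | "Suc n > length w"
      by linarith
    then show ?thesis
    proof cases
      case 1
      then show ?thesis
        using successively_nth[OF w(2)] by (simp add: x_def)
    next
      case 2
      then have "n = length w - 1"
        by simp
      then have "x n = last w" "x (Suc n) = s (last w)"
        using \<open>w \<noteq> []\<close> by (simp_all add: x_def last_conv_nth)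
      then show ?thesis
        using s last_w by simp
    next
      case 3
      then have "Suc (Suc n) - length w = Suc (Suc n - length w)"
        by simp
      then show ?thesis
        using 3 s iter by (simp add: x_def)
    qed
  qed
  ultimately have "x \<in> X_A N A"
    unfolding X_A_def by blast
  moreover have "w = map x [0..<0 + length w]"
    by (rule nth_equalityI) (simp_all add: x_def)
  ultimately show ?thesis
    unfolding B_star_def by blast
qed

lemma mat_pow_Suc_pos_iff:
  "mat_pow N A (Suc n) i j > 0 \<longleftrightarrow> (\<exists>k\<in>{1..N}. mat_pow N A n i k > 0 \<and> A k j > 0)"
  by (simp add: sum_eq_0_iff flip: neq0_conv)

lemma mat_pow_pos_iff_walk:
  assumes "i \<in> {1..N}" "j \<in> {1..N}"
  shows "mat_pow N A n i j > 0 \<longleftrightarrow> (\<exists>vs. length vs = n \<and> set vs \<subseteq> {1..N} \<and>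
    successively (\<lambda>a b. A a b > 0) (i # vs) \<and> last (i # vs) = j)"
  using assms
proof (induction n arbitrary: j)
  case 0
  then show ?case by auto
next
  case (Suc n)
  show ?case
  proof
    assume "mat_pow N A (Suc n) i j > 0"
    then obtain k where k: "k \<in> {1..N}" "mat_pow N A n i k > 0" "A k j > 0"
      unfolding mat_pow_Suc_pos_iff by blast
    then obtain ws where ws: "length ws = n" "set ws \<subseteq> {1..N}"
      "successively (\<lambda>a b. A a b > 0) (i # ws)" "last (i # ws) = k"
      using Suc.IH Suc.prems by blast
    with k have "successively (\<lambda>a b. A a b > 0) ((i # ws) @ [j])"
      by (simp only: successively_append_iff) simp
    then show "\<exists>vs. length vs = Suc n \<and> set vs \<subseteq> {1..N} \<and>
      successively (\<lambda>a b. A a b > 0) (i # vs) \<and> last (i # vs) = j"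
      using ws Suc.prems by (intro exI[of _ "ws @ [j]"]) auto
  next
    assume "\<exists>vs. length vs = Suc n \<and> set vs \<subseteq> {1..N} \<and>
      successively (\<lambda>a b. A a b > 0) (i # vs) \<and> last (i # vs) = j"
    then obtain vs where vs: "length vs = Suc n" "set vs \<subseteq> {1..N}"
      "successively (\<lambda>a b. A a b > 0) (i # vs)" "last (i # vs) = j"
      by blast
    then obtain ws where "vs = ws @ [j]"
      by (cases vs rule: rev_exhaust) auto
    with vs have ws: "length ws = n" "set ws \<subseteq> {1..N}"
      "successively (\<lambda>a b. A a b > 0) ((i # ws) @ [j])"
      by simp_all
    have "last (i # ws) \<in> {1..N}"
      using ws(2) Suc.prems(1) by (cases ws rule: rev_exhaust) auto
    moreover have "A (last (i # ws)) j > 0" "successively (\<lambda>a b. A a b > 0) (i # ws)"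
      using ws(3) by (simp_all only: successively_append_iff) simp_all
    moreover have "mat_pow N A n i (last (i # ws)) > 0"
      using Suc.IH[OF Suc.prems(1) \<open>last (i # ws) \<in> {1..N}\<close>] ws(1,2)
        \<open>successively _ (i # ws)\<close> by blast
    ultimately show "mat_pow N A (Suc n) i j > 0"
      unfolding mat_pow_Suc_pos_iff by blast
  qed
qed

lemma zero_one_matrix_pos_iff:
  "zero_one_matrix N A \<Longrightarrow> i \<in> {1..N} \<Longrightarrow> j \<in> {1..N} \<Longrightarrow> A i j > 0 \<longleftrightarrow> A i j = 1"
  unfolding zero_one_matrix_def by fastforce

lemma irreducible_mat_closed_walk:
  assumes "zero_one_matrix N A" "irreducible_mat N A" "i \<in> {1..N}"
  shows "\<exists>ws. ws \<noteq> [] \<and> last ws = i \<and> admissible N A (i # ws)"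
proof -
  obtain n where "n \<ge> 1" "mat_pow N A n i i > 0"
    using assms(2,3) unfolding irreducible_mat_def by blast
  then obtain ws where "length ws = n" "set ws \<subseteq> {1..N}" "last (i # ws) = i"
    and walk: "successively (\<lambda>a b. A a b > 0) (i # ws)"
    using mat_pow_pos_iff_walk[OF assms(3,3)] by blast
  then have ws: "ws \<noteq> []" "last ws = i" and set: "set (i # ws) \<subseteq> {1..N}"
    using \<open>n \<ge> 1\<close> assms(3) by (auto split: if_splits)
  have "successively (\<lambda>a b. A a b = 1) (i # ws)"
    using walk by (rule successively_mono) (use set zero_one_matrix_pos_iff[OF assms(1)] in blast)
  then show ?thesis
    using ws set unfolding admissible_def by blast
qed

lemma irreducible_mat_successor:
  assumes "zero_one_matrix N A" "irreducible_mat N A" "i \<in> {1..N}"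
  shows "\<exists>j\<in>{1..N}. A i j = 1"
proof -
  obtain ws where "ws \<noteq> []" "admissible N A (i # ws)"
    using irreducible_mat_closed_walk[OF assms] by blast
  then show ?thesis
    by (cases ws) (auto simp: admissible_def)
qed

lemma irreducible_mat_predecessor:
  assumes "zero_one_matrix N A" "irreducible_mat N A" "j \<in> {1..N}"
  shows "\<exists>i\<in>{1..N}. A i j = 1"
proof -
  obtain ws where "ws \<noteq> []" "last ws = j" "admissible N A (j # ws)"
    using irreducible_mat_closed_walk[OF assms] by blast
  then obtain us where "admissible N A ((j # us) @ [j])"
    by (metis append_Cons append_butlast_last_id)
  then have "set (j # us) \<subseteq> {1..N}" "A (last (j # us)) j = 1"
    unfolding admissible_def successively_append_iff by auto
  then show ?thesis
    using last_in_set[of "j # us"] by blast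
qed

definition row_functional :: "nat \<Rightarrow> (nat \<Rightarrow> nat \<Rightarrow> nat) \<Rightarrow> bool" where
  "row_functional N A \<longleftrightarrow> (\<forall>i\<in>{1..N}. \<forall>j\<in>{1..N}. \<forall>k\<in>{1..N}. A i j = 1 \<longrightarrow> A i k = 1 \<longrightarrow> j = k)"

lemma permutation_mat_row_functional:
  assumes "permutation_mat N A"
  shows "row_functional N A"
  unfolding row_functional_def
proof (intro ballI impI)
  fix i j k
  assume i: "i \<in> {1..N}" and "j \<in> {1..N}" "k \<in> {1..N}" "A i j = 1" "A i k = 1"
  have "\<forall>i\<in>{1..N}. card {j\<in>{1..N}. A i j = 1} = 1"
    using assms unfolding permutation_mat_def by (rule conjunct1[OF conjunct2])
  then have "card {j\<in>{1..N}. A i j = 1} = 1"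
    using i by (rule bspec)
  then obtain x where "{j\<in>{1..N}. A i j = 1} = {x}"
    by (rule card_1_singletonE)
  moreover have "j \<in> {j\<in>{1..N}. A i j = 1}" "k \<in> {j\<in>{1..N}. A i j = 1}"
    using \<open>j \<in> {1..N}\<close> \<open>k \<in> {1..N}\<close> \<open>A i j = 1\<close> \<open>A i k = 1\<close> by simp_all
  ultimately show "j = k"
    by simp
qed

lemma permutation_matI:
  assumes "zero_one_matrix N A"
    and rows: "\<forall>i\<in>{1..N}. \<exists>!j. j \<in> {1..N} \<and> A i j = 1"
    and cols: "\<forall>j\<in>{1..N}. \<exists>i\<in>{1..N}. A i j = 1"
  shows "permutation_mat N A"
proof -
  define f where "f i = (THE j. j \<in> {1..N} \<and> A i j = 1)" for i
  have f: "f i \<in> {1..N} \<and> A i (f i) = 1" if "i \<in> {1..N}" for i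
    using theI'[OF rows[rule_format, OF that]] unfolding f_def .
  have f_unique: "j = f i" if "i \<in> {1..N}" "j \<in> {1..N}" "A i j = 1" for i j
    unfolding f_def using rows[rule_format, OF that(1)] that(2,3)
    by (intro the1_equality[symmetric]) simp_all
  have row_eq: "{j\<in>{1..N}. A i j = 1} = {f i}" if "i \<in> {1..N}" for i
    using f[OF that] f_unique[OF that] by blast
  have surj: "{1..N} \<subseteq> f ` {1..N}"
  proof
    fix j
    assume "j \<in> {1..N}"
    then obtain i where "i \<in> {1..N}" "A i j = 1"
      using cols by blast
    then show "j \<in> f ` {1..N}"
      using f_unique[of i j] \<open>j \<in> {1..N}\<close> by blast
  qed
  have "inj_on f {1..N}"
    using finite_surj_inj[OF finite_atLeastAtMost surj] .
  have col_eq: "{i\<in>{1..N}. A i j = 1} = {k}" if k: "k \<in> {1..N}" and "f k = j" for j k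
  proof -
    have "j \<in> {1..N}"
      using f[OF k] \<open>f k = j\<close> by blast
    then have "A i j = 1 \<longleftrightarrow> f i = j" if "i \<in> {1..N}" for i
      using f[OF that] f_unique[OF that] by blast
    then have "{i\<in>{1..N}. A i j = 1} = {i\<in>{1..N}. f i = j}"
      by blast
    also have "\<dots> = {k}"
      using inj_onD[OF \<open>inj_on f {1..N}\<close>] k \<open>f k = j\<close> by blast
    finally show ?thesis .
  qed
  have "card {i\<in>{1..N}. A i j = 1} = 1" if j: "j \<in> {1..N}" for j
  proof -
    obtain k where "k \<in> {1..N}" "f k = j"
      using surj j by blast
    then show ?thesis
      using col_eq by simp
  qed
  then show ?thesis
    unfolding permutation_mat_def using assms(1) row_eq by simp
qed

lemma irreducible_non_permutation_mat_branches:
  assumes "zero_one_matrix N A" "irreducible_mat N A" "\<not> permutation_mat N A"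
  shows "\<exists>a\<in>{1..N}. \<exists>b\<in>{1..N}. \<exists>c\<in>{1..N}. b \<noteq> c \<and> A a b = 1 \<and> A a c = 1"
proof (rule ccontr)
  assume no_branch: "\<not> ?thesis"
  have "\<exists>!j. j \<in> {1..N} \<and> A i j = 1" if i: "i \<in> {1..N}" for i
  proof -
    obtain j where "j \<in> {1..N}" "A i j = 1"
      using irreducible_mat_successor[OF assms(1,2) i] by blast
    then show ?thesis
      using no_branch i by (intro ex1I[of _ j]) blast+
  qed
  then have "\<forall>i\<in>{1..N}. \<exists>!j. j \<in> {1..N} \<and> A i j = 1"
    by blast
  moreover have "\<forall>j\<in>{1..N}. \<exists>i\<in>{1..N}. A i j = 1"
    using irreducible_mat_predecessor[OF assms(1,2)] by blast
  ultimately show False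
    using permutation_matI assms(1,3) by blast
qed

definition prefix_antichain :: "'a list set \<Rightarrow> bool" where
  "prefix_antichain W \<longleftrightarrow> (\<forall>u\<in>W. \<forall>v\<in>W. prefix u v \<longrightarrow> u = v)"

lemma concat_mono_prefix: "prefix xs ys \<Longrightarrow> prefix (concat xs) (concat ys)"
  by (auto simp: prefix_def)

lemma functional_walks_prefix_cases:
  assumes functional: "\<forall>a\<in>S. \<forall>b\<in>S. \<forall>c\<in>S. R a b \<longrightarrow> R a c \<longrightarrow> b = c"
  shows "successively R xs \<Longrightarrow> successively R ys \<Longrightarrow> set xs \<subseteq> S \<Longrightarrow> set ys \<subseteq> S \<Longrightarrow>
    hd xs = hd ys \<Longrightarrow> prefix xs ys \<or> prefix ys xs"
proof (induction xs arbitrary: ys)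
  case Nil
  then show ?case by simp
next
  case (Cons a xs)
  show ?case
  proof (cases "ys = [] \<or> xs = [] \<or> tl ys = []")
    case True
    with Cons.prems(5) show ?thesis
      by (cases ys) auto
  next
    case False
    then obtain ys' where ys: "ys = a # ys'" "xs \<noteq> []" "ys' \<noteq> []"
      using Cons.prems(5) by (cases ys) auto
    then have "R a (hd xs)" "R a (hd ys')" "successively R xs" "successively R ys'"
      using Cons.prems(1,2) by (simp_all add: successively_Cons)
    moreover have "a \<in> S" "hd xs \<in> S" "hd ys' \<in> S"
      using Cons.prems(3,4) ys by auto
    ultimately have "prefix xs ys' \<or> prefix ys' xs"
      using Cons.IH Cons.prems(3,4) ys functional by simp
    then show ?thesis
      using ys by auto
  qed
qed

lemma closed_walk_power:
  assumes "successively R (a # ws)" "last (a # ws) = a"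
  shows "successively R (a # concat (replicate k ws)) \<and> last (a # concat (replicate k ws)) = a"
proof (induction k)
  case 0
  then show ?case by simp
next
  case (Suc k)
  let ?r = "concat (replicate k ws)"
  have "successively R ((a # ws) @ ?r)"
  proof (cases "?r = []")
    case True
    show ?thesis
      unfolding True using assms(1) by simp
  next
    case False
    then have "R a (hd ?r)" "successively R ?r"
      using Suc.IH by (simp_all add: successively_Cons)
    then show ?thesis
      using assms False unfolding successively_append_iff by simp
  qed
  moreover have "last ((a # ws) @ ?r) = a"
    using assms(2) Suc.IH by (cases "?r = []") auto
  ultimately show ?case
    by simp
qed

lemma pumped_words_not_prefix:
  assumes "ws \<noteq> []" "y \<noteq> hd ws" "k \<noteq> l"
  shows "\<not> prefix (a # concat (replicate k ws) @ [y]) (a # concat (replicate l ws) @ [y])"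
proof -
  obtain w0 ws' where w0: "ws = w0 # ws'"
    using assms(1) list.exhaust by blast
  have split: "concat (replicate (Suc (i + m)) ws) =
      concat (replicate i ws) @ w0 # ws' @ concat (replicate m ws)" for i m
    unfolding add_Suc_right[symmetric] replicate_add by (simp add: w0)
  have "k < l \<or> l < k"
    using assms(3) by linarith
  then consider m where "l = Suc (k + m)" | m where "k = Suc (l + m)"
    by (meson less_iff_Suc_add)
  then show ?thesis
  proof cases
    case 1
    show ?thesis
      unfolding 1 split using assms(2) w0 by simp
  next
    case 2
    show ?thesis
      unfolding 2 split using assms(2) w0 by simp
  qed
qed

lemma prefix_antichain_image:
  assumes "\<And>k l. k \<noteq> l \<Longrightarrow> \<not> prefix (\<gamma> k) (\<gamma> l)"
  shows "prefix_antichain (\<gamma> ` {..<n}) \<and> card (\<gamma> ` {..<n}) = n"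
proof
  show "prefix_antichain (\<gamma> ` {..<n})"
    unfolding prefix_antichain_def
  proof (intro ballI impI)
    fix u v
    assume "u \<in> \<gamma> ` {..<n}" "v \<in> \<gamma> ` {..<n}" "prefix u v"
    then obtain k l where "u = \<gamma> k" "v = \<gamma> l" "prefix (\<gamma> k) (\<gamma> l)"
      by blast
    then show "u = v"
      using assms[of k l] by (cases "k = l") simp_all
  qed
  have "inj \<gamma>"
  proof (rule injI)
    fix k l
    assume "\<gamma> k = \<gamma> l"
    then show "k = l"
      using assms[of k l] by (cases "k = l") simp_all
  qed
  then show "card (\<gamma> ` {..<n}) = n"
    by (simp add: card_image inj_on_subset)
qed

lemma B_star_prefix_antichain_unbounded:
  assumes "zero_one_matrix N A" "irreducible_mat N A" "\<not> permutation_mat N A"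
  shows "\<exists>W\<subseteq>B_star N A. [] \<notin> W \<and> prefix_antichain W \<and> card W = n"
proof -
  obtain a b c where abc: "a \<in> {1..N}" "b \<in> {1..N}" "c \<in> {1..N}" "b \<noteq> c" "A a b = 1" "A a c = 1"
    using irreducible_non_permutation_mat_branches[OF assms] by blast
  obtain ws where ws: "ws \<noteq> []" "last ws = a" "admissible N A (a # ws)"
    using irreducible_mat_closed_walk[OF assms(1,2) abc(1)] by blast
  define y where "y = (if b = hd ws then c else b)"
  have y: "y \<in> {1..N}" "A a y = 1" "y \<noteq> hd ws"
    using abc unfolding y_def by auto
  define \<gamma> where "\<gamma> k = a # concat (replicate k ws) @ [y]" for k
  have "admissible N A (\<gamma> k)" for k
  proof -
    have "successively (\<lambda>a b. A a b = 1) (a # concat (replicate k ws))"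
      "last (a # concat (replicate k ws)) = a"
      using closed_walk_power[of _ a ws k] ws unfolding admissible_def by auto
    moreover have "set (\<gamma> k) \<subseteq> {1..N}"
      using ws(3) y(1) unfolding admissible_def \<gamma>_def by auto
    ultimately show ?thesis
      using y(2) unfolding admissible_def \<gamma>_def
      by (simp add: successively_append_iff flip: append_Cons)
  qed
  then have "\<gamma> k \<in> B_star N A" for k
    using in_B_star_if_admissible irreducible_mat_successor[OF assms(1,2)]
    unfolding \<gamma>_def by blast
  moreover have "\<not> prefix (\<gamma> k) (\<gamma> l)" if "k \<noteq> l" for k l
    unfolding \<gamma>_def using pumped_words_not_prefix[OF ws(1) y(3) that] .
  then have "prefix_antichain (\<gamma> ` {..<n}) \<and> card (\<gamma> ` {..<n}) = n"
    by (rule prefix_antichain_image)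
  moreover have "[] \<notin> \<gamma> ` {..<n}"
    unfolding \<gamma>_def by auto
  ultimately show ?thesis
    by (intro exI[of _ "\<gamma> ` {..<n}"]) auto
qed

lemma code_not_Nil: "is_code C \<Longrightarrow> [] \<notin> C"
proof
  assume code: "is_code C" and "[] \<in> C"
  then have "set [[]] \<subseteq> C" "set ([] :: nat list list) \<subseteq> C"
    and "concat [[]] = concat ([] :: nat list list)"
    by simp_all
  then have "[[]] = ([] :: nat list list)"
    using code unfolding is_code_def by blast
  then show False
    by simp
qed

lemma right_markov_codeD:
  assumes "right_markov_code N A M \<omega>"
  shows "is_prefix_code (\<omega> ` {1..M})"
    and "\<forall>\<gamma>\<in>B_star N A. \<exists>\<eta>\<in>B_star N A. \<gamma> @ \<eta> \<in> B_star N A \<and>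
      (\<exists>!is. set is \<subseteq> {1..M} \<and> \<gamma> @ \<eta> = concat (map \<omega> is))"
    and "\<forall>i\<in>{1..M}. \<forall>j\<in>{1..M}. \<exists>ns. set ns \<subseteq> {1..M} \<and>
      \<omega> i @ concat (map \<omega> ns) @ \<omega> j \<in> B_star N A"
  using assms unfolding right_markov_code_def by - (elim conjE, assumption)+

lemma right_markov_code_nonempty:
  assumes "right_markov_code N A M \<omega>" "i \<in> {1..M}"
  shows "\<omega> i \<noteq> []"
proof -
  have "is_code (\<omega> ` {1..M})"
    using right_markov_codeD(1)[OF assms(1)] unfolding is_prefix_code_def by (rule conjunct1)
  then have "[] \<notin> \<omega> ` {1..M}"
    by (rule code_not_Nil)
  then show ?thesis
    using imageI[OF assms(2), of \<omega>] by auto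
qed

lemma right_markov_code_extends:
  assumes "right_markov_code N A M \<omega>" "\<gamma> \<in> B_star N A"
  shows "\<exists>is. set is \<subseteq> {1..M} \<and> prefix \<gamma> (concat (map \<omega> is)) \<and> concat (map \<omega> is) \<in> B_star N A"
proof -
  obtain \<eta> where \<eta>: "\<gamma> @ \<eta> \<in> B_star N A" "\<exists>!is. set is \<subseteq> {1..M} \<and> \<gamma> @ \<eta> = concat (map \<omega> is)"
    using bspec[OF right_markov_codeD(2)[OF assms(1)] assms(2)] by (elim bexE conjE)
  obtain "is" where "is": "set is \<subseteq> {1..M}" "\<gamma> @ \<eta> = concat (map \<omega> is)"
    using ex1_implies_ex[OF \<eta>(2)] by (elim exE conjE)
  have "prefix \<gamma> (concat (map \<omega> is))"
    using prefixI[OF "is"(2)[symmetric]] .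
  then show ?thesis
    using "is" \<eta>(1) by auto
qed

lemma successively_code_matrix_if_concat:
  "\<forall>i\<in>set is. \<omega> i \<noteq> [] \<Longrightarrow> successively (\<lambda>a b. A a b = 1) (concat (map \<omega> is)) \<Longrightarrow>
    successively (\<lambda>i j. code_matrix A \<omega> i j = 1) is"
proof (induction "is")
  case Nil
  then show ?case by simp
next
  case (Cons i "is")
  have walk: "successively (\<lambda>a b. A a b = 1) (\<omega> i @ concat (map \<omega> is))"
    using Cons.prems(2) by simp
  then have "successively (\<lambda>i j. code_matrix A \<omega> i j = 1) is"
    using Cons by (simp add: successively_append_iff)
  moreover have "code_matrix A \<omega> i (hd is) = 1" if "is \<noteq> []"
  proof -
    have "hd (concat (map \<omega> is)) = hd (\<omega> (hd is))" "concat (map \<omega> is) \<noteq> []" "\<omega> i \<noteq> []"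
      using that Cons.prems(1) by (cases "is"; simp)+
    moreover have "A (last (\<omega> i)) (hd (concat (map \<omega> is))) = 1"
      using walk calculation(2,3) unfolding successively_append_iff by blast
    ultimately show ?thesis
      unfolding code_matrix_def by simp
  qed
  ultimately show ?case
    by (auto simp: successively_Cons)
qed

lemma irreducible_code_matrix:
  assumes "right_markov_code N A M \<omega>"
  shows "irreducible_mat M (code_matrix A \<omega>)"
  unfolding irreducible_mat_def
proof (intro ballI)
  fix i j
  assume i: "i \<in> {1..M}" and j: "j \<in> {1..M}"
  then obtain ns where ns: "set ns \<subseteq> {1..M}" "\<omega> i @ concat (map \<omega> ns) @ \<omega> j \<in> B_star N A"
    using right_markov_codeD(3)[OF assms] by blast
  then have "successively (\<lambda>a b. A a b = 1) (concat (map \<omega> (i # ns @ [j])))"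
    using admissible_if_in_B_star unfolding admissible_def by simp
  moreover have path_set: "set (i # ns @ [j]) \<subseteq> {1..M}"
    using ns(1) i j by simp
  then have "\<forall>k\<in>set (i # ns @ [j]). \<omega> k \<noteq> []"
    using right_markov_code_nonempty[OF assms] by blast
  ultimately have "successively (\<lambda>a b. code_matrix A \<omega> a b = 1) (i # ns @ [j])"
    using successively_code_matrix_if_concat by blast
  then have "successively (\<lambda>a b. code_matrix A \<omega> a b > 0) (i # ns @ [j])"
    by (rule successively_mono) simp
  then have "mat_pow M (code_matrix A \<omega>) (length (ns @ [j])) i j > 0"
    unfolding mat_pow_pos_iff_walk[OF i j] using path_set by (intro exI[of _ "ns @ [j]"]) simp
  then show "\<exists>n\<ge>1. mat_pow M (code_matrix A \<omega>) n i j > 0"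
    by (intro exI[of _ "length (ns @ [j])"]) simp
qed

lemma prefix_antichain_card_le:
  fixes W :: "nat list set"
  assumes nonempty: "\<And>i. i \<in> {1..M} \<Longrightarrow> \<omega> i \<noteq> []"
    and extends: "\<And>\<gamma>. \<gamma> \<in> B_star N A \<Longrightarrow> \<exists>is. set is \<subseteq> {1..M} \<and>
      prefix \<gamma> (concat (map \<omega> is)) \<and> concat (map \<omega> is) \<in> B_star N A"
    and functional: "row_functional M (code_matrix A \<omega>)"
    and W: "W \<subseteq> B_star N A" "[] \<notin> W" "prefix_antichain W"
  shows "card W \<le> M"
proof -
  obtain F where F: "\<And>u. u \<in> W \<Longrightarrow> set (F u) \<subseteq> {1..M} \<and> prefix u (concat (map \<omega> (F u))) \<and>
      concat (map \<omega> (F u)) \<in> B_star N A"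
    using extends W(1) by (metis subsetD)
  have walk: "successively (\<lambda>i j. code_matrix A \<omega> i j = 1) (F u)" if "u \<in> W" for u
    using successively_code_matrix_if_concat admissible_if_in_B_star F[OF that] nonempty
    unfolding admissible_def by blast
  have F_ne: "F u \<noteq> []" if "u \<in> W" for u
    using F[OF that] W(2) that by auto
  have "inj_on (\<lambda>u. hd (F u)) W"
  proof (rule inj_onI)
    fix u v
    assume u: "u \<in> W" and v: "v \<in> W" and "hd (F u) = hd (F v)"
    then have "prefix (F u) (F v) \<or> prefix (F v) (F u)"
      using functional_walks_prefix_cases[OF functional[unfolded row_functional_def]
          walk[OF u] walk[OF v]] F[OF u] F[OF v] by blast
    then have "prefix (concat (map \<omega> (F u))) (concat (map \<omega> (F v))) \<or>
        prefix (concat (map \<omega> (F v))) (concat (map \<omega> (F u)))"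
      using concat_mono_prefix map_mono_prefix by blast
    then have "prefix u v \<or> prefix v u"
      using F[OF u] F[OF v] prefix_same_cases prefix_order.trans by metis
    then show "u = v"
      using W(3) u v unfolding prefix_antichain_def by blast
  qed
  moreover have "(\<lambda>u. hd (F u)) ` W \<subseteq> {1..M}"
    using F F_ne hd_in_set by blast
  ultimately show ?thesis
    using card_inj_on_le[of "\<lambda>u. hd (F u)" W "{1..M}"] by simp
qed

theorem mainTheorem6:
  fixes N M :: nat and A :: "nat \<Rightarrow> nat \<Rightarrow> nat" and \<omega> :: "nat \<Rightarrow> nat list"
  assumes "zero_one_matrix N A"
    and "irreducible_mat N A"
    and "\<not> permutation_mat N A"
    and "right_markov_code N A M \<omega>"
  shows "irreducible_mat M (code_matrix A \<omega>) \<and> \<not> permutation_mat M (code_matrix A \<omega>)"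
proof
  show "irreducible_mat M (code_matrix A \<omega>)"
    using irreducible_code_matrix[OF assms(4)] .
  show "\<not> permutation_mat M (code_matrix A \<omega>)"
  proof
    assume "permutation_mat M (code_matrix A \<omega>)"
    then have functional: "row_functional M (code_matrix A \<omega>)"
      by (rule permutation_mat_row_functional)
    obtain W where W: "W \<subseteq> B_star N A" "[] \<notin> W" "prefix_antichain W" and "card W = Suc M"
      using B_star_prefix_antichain_unbounded[OF assms(1-3)] by blast
    moreover have "card W \<le> M"
      using right_markov_code_nonempty[OF assms(4)] right_markov_code_extends[OF assms(4)]
      by (rule prefix_antichain_card_le[OF _ _ functional W])
    ultimately show False
      by simp
  qed
qed

end
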